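(* Let $G=(V,E)$ be a graph with a partition of its vertex set into sets $V_1,\dots,V_t$ ($t$ a positive integer), each $V_i$ being a set of pairwise true twins. Let $m_i=|V_i|$ for $1\le i\le t$. Let $\Gamma$ be a finite Abelian group of order $m$ with $\sum_{i=1}^t m_i=m-1$. If $\Gamma^*$ can be partitioned into pairwise disjoint sets $S_1,\dots,S_t$ with $|S_i|=m_i$ and $\sum_{s\in S_i}s=0$ for every $i$, then $G$ has a $\Gamma^*$-distance anti-magic labeling.
   Context: $\Gamma^*=\Gamma\setminus\{0\}$. In a graph $G=(V,E)$, a set $M\subseteq V$ is a module if $N(x)\setminus M=N(y)\setminus M$ for all $x,y\in M$. Two vertices $x,y$ are twins if $\{x,y\}$ is a module; they are false twins if moreover $\{x,y\}\notin E$ and true twins if $\{x,y\}\in E$ (every vertex is considered a false and true twin of itself). A $\Gamma^*$-distance anti-magic labeling of $G$ (with $|V|=|\Gamma|-1$) is a bijection $\ell\colon V\to\Gamma^*$ such that the weights $w(v)=\sum_{u\in N(v)}\ell(u)$, $v\in V$, are pairwise distinct. *)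

theory Defs
  imports Main
begin

definition simple_graph :: "'v set \<Rightarrow> ('v \<Rightarrow> 'v \<Rightarrow> bool) \<Rightarrow> bool" where
  "simple_graph V adj \<longleftrightarrow> finite V \<and>
     (\<forall>x y. adj x y \<longrightarrow> x \<in> V \<and> y \<in> V) \<and>
     (\<forall>x y. adj x y \<longrightarrow> adj y x) \<and> (\<forall>x. \<not> adj x x)"

definition nbhd :: "'v set \<Rightarrow> ('v \<Rightarrow> 'v \<Rightarrow> bool) \<Rightarrow> 'v \<Rightarrow> 'v set" where
  "nbhd V adj v = {u \<in> V. adj v u}"

definition is_module :: "'v set \<Rightarrow> ('v \<Rightarrow> 'v \<Rightarrow> bool) \<Rightarrow> 'v set \<Rightarrow> bool" where
  "is_module V adj M \<longleftrightarrow> M \<subseteq> V \<and>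
     (\<forall>x\<in>M. \<forall>y\<in>M. nbhd V adj x - M = nbhd V adj y - M)"

definition true_twins :: "'v set \<Rightarrow> ('v \<Rightarrow> 'v \<Rightarrow> bool) \<Rightarrow> 'v \<Rightarrow> 'v \<Rightarrow> bool" where
  "true_twins V adj x y \<longleftrightarrow> is_module V adj {x, y} \<and> (x = y \<or> adj x y)"

definition dist_antimagic_labeling ::
  "'v set \<Rightarrow> ('v \<Rightarrow> 'v \<Rightarrow> bool) \<Rightarrow> ('v \<Rightarrow> 'g::{ab_group_add,finite}) \<Rightarrow> bool" where
  "dist_antimagic_labeling V adj l \<longleftrightarrow>
     bij_betw l V (UNIV - {0}) \<and>
     inj_on (\<lambda>v. \<Sum>u\<in>nbhd V adj v. l u) V"

end

theory Submission
  imports Defs "HOL-Library.Disjoint_Sets"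
begin

text \<open>Label each twin class \<open>P i\<close> bijectively by \<open>S i\<close>. A class of true twins meeting the
  closed neighbourhood \<open>N[v]\<close> lies entirely inside it, so \<open>N[v]\<close> is a union of classes and its
  label sum is \<open>0\<close>. Hence the weight of \<open>v\<close> is \<open>-l v\<close>, and distinct labels give distinct
  weights.\<close>

lemma blockwise_bij_betw_exists:
  assumes disj: "disjoint_family_on A I"
    and fin: "\<And>i. i \<in> I \<Longrightarrow> finite (A i)" "\<And>i. i \<in> I \<Longrightarrow> finite (B i)"
    and card: "\<And>i. i \<in> I \<Longrightarrow> card (A i) = card (B i)"
  shows "\<exists>f. \<forall>i\<in>I. bij_betw f (A i) (B i)"
proof -
  have "\<forall>i\<in>I. \<exists>g. bij_betw g (A i) (B i)"
    using fin card by (metis finite_same_card_bij)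
  then obtain g where g: "\<And>i. i \<in> I \<Longrightarrow> bij_betw (g i) (A i) (B i)"
    by metis
  define f where "f x = g (THE i. i \<in> I \<and> x \<in> A i) x" for x
  have "bij_betw f (A i) (B i)" if i: "i \<in> I" for i
  proof (rule bij_betw_cong[THEN iffD1, OF _ g[OF i]])
    fix x assume "x \<in> A i"
    then have "(THE i. i \<in> I \<and> x \<in> A i) = i"
      using i disj by (auto simp: disjoint_family_on_def)
    then show "g i x = f x" by (simp add: f_def)
  qed
  then show ?thesis by blast
qed

lemma sum_union_of_blocks_eq_0:
  fixes f :: "'a \<Rightarrow> 'b::comm_monoid_add"
  assumes "finite I" and disj: "disjoint_family_on P I" and fin: "\<And>i. i \<in> I \<Longrightarrow> finite (P i)"
    and cover: "X \<subseteq> (\<Union>i\<in>I. P i)"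
    and saturated: "\<And>i. i \<in> I \<Longrightarrow> P i \<inter> X \<noteq> {} \<Longrightarrow> P i \<subseteq> X"
    and block_sum: "\<And>i. i \<in> I \<Longrightarrow> sum f (P i) = 0"
  shows "sum f X = 0"
proof -
  define K where "K = {i \<in> I. P i \<inter> X \<noteq> {}}"
  have "K \<subseteq> I" by (auto simp: K_def)
  then have "finite K" using \<open>finite I\<close> by (rule finite_subset)
  have "X = (\<Union>i\<in>K. P i)"
  proof
    show "X \<subseteq> (\<Union>i\<in>K. P i)" using cover by (force simp: K_def)
    show "(\<Union>i\<in>K. P i) \<subseteq> X" using saturated by (auto simp: K_def)
  qed
  also have "sum f \<dots> = (\<Sum>i\<in>K. sum f (P i))"
    using \<open>finite K\<close> \<open>K \<subseteq> I\<close> fin disjoint_family_on_mono[OF \<open>K \<subseteq> I\<close> disj]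
    by (intro sum.UNION_disjoint_family) auto
  also have "\<dots> = 0"
    using \<open>K \<subseteq> I\<close> block_sum by (auto intro: sum.neutral)
  finally show ?thesis .
qed

lemma true_twin_mem_closed_nbhd:
  assumes graph: "simple_graph V adj" and twins: "true_twins V adj u y"
    and u: "u \<in> insert v (nbhd V adj v)"
  shows "y \<in> insert v (nbhd V adj v)"
proof -
  have "is_module V adj {u, y}" and twin_adj: "u = y \<or> adj u y"
    using twins by (simp_all add: true_twins_def)
  then have module: "nbhd V adj u - {u, y} = nbhd V adj y - {u, y}" and "y \<in> V"
    unfolding is_module_def by blast+
  have sym: "adj a b \<Longrightarrow> adj b a" and inV: "adj a b \<Longrightarrow> a \<in> V" for a b
    using graph by (auto simp: simple_graph_def)
  consider "y = v" | "u = v" "adj v y" | "u \<noteq> v" "y \<noteq> v" "adj v u"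
    using twin_adj u unfolding nbhd_def by blast
  then show ?thesis
  proof cases
    case 2
    then show ?thesis using \<open>y \<in> V\<close> by (simp add: nbhd_def)
  next
    case 3
    then have "v \<in> nbhd V adj u - {u, y}"
      using sym inV unfolding nbhd_def by blast
    then have "adj y v"
      using module unfolding nbhd_def by blast
    then show ?thesis using \<open>y \<in> V\<close> sym by (simp add: nbhd_def)
  qed simp
qed

lemma true_twin_class_subset_closed_nbhd:
  assumes graph: "simple_graph V adj" and twins: "\<forall>x\<in>C. \<forall>y\<in>C. true_twins V adj x y"
    and meets: "C \<inter> insert v (nbhd V adj v) \<noteq> {}"
  shows "C \<subseteq> insert v (nbhd V adj v)"
proof
  fix y assume "y \<in> C"
  obtain u where "u \<in> C" "u \<in> insert v (nbhd V adj v)" using meets by blast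
  then show "y \<in> insert v (nbhd V adj v)"
    using \<open>y \<in> C\<close> twins by (meson true_twin_mem_closed_nbhd[OF graph])
qed

lemma dist_antimagic_labelingI_closed_nbhd_sum_0:
  assumes graph: "simple_graph V adj" and bij: "bij_betw l V (UNIV - {0})"
    and closed_sum: "\<And>v. v \<in> V \<Longrightarrow> (\<Sum>u\<in>insert v (nbhd V adj v). l u) = 0"
  shows "dist_antimagic_labeling V adj l"
proof -
  have weight: "(\<Sum>u\<in>nbhd V adj v. l u) = - l v" if "v \<in> V" for v
  proof -
    have "finite (nbhd V adj v)" "v \<notin> nbhd V adj v"
      using graph by (auto simp: simple_graph_def nbhd_def)
    then have "l v + (\<Sum>u\<in>nbhd V adj v. l u) = 0"
      using closed_sum[OF that] by simp
    then show ?thesis by (simp add: add_eq_0_iff)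
  qed
  have "inj_on l V" using bij by (rule bij_betw_imp_inj_on)
  then have "inj_on (\<lambda>v. \<Sum>u\<in>nbhd V adj v. l u) V"
    by (auto simp: inj_on_def weight)
  then show ?thesis using bij by (simp add: dist_antimagic_labeling_def)
qed

theorem proposition4p8:
  fixes V :: "'v set" and adj :: "'v \<Rightarrow> 'v \<Rightarrow> bool"
    and t :: nat and P :: "nat \<Rightarrow> 'v set" and S :: "nat \<Rightarrow> 'g::{ab_group_add,finite} set"
  assumes graph: "simple_graph V adj"
    and t_pos: "t \<ge> 1"
    and P_nonempty: "\<forall>i\<in>{1..t}. P i \<noteq> {}"
    and P_disj: "\<forall>i\<in>{1..t}. \<forall>j\<in>{1..t}. i \<noteq> j \<longrightarrow> P i \<inter> P j = {}"
    and P_cover: "(\<Union>i\<in>{1..t}. P i) = V"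
    and P_twins: "\<forall>i\<in>{1..t}. \<forall>x\<in>P i. \<forall>y\<in>P i. true_twins V adj x y"
    and order: "(\<Sum>i=1..t. card (P i)) = card (UNIV :: 'g set) - 1"
    and S_disj: "\<forall>i\<in>{1..t}. \<forall>j\<in>{1..t}. i \<noteq> j \<longrightarrow> S i \<inter> S j = {}"
    and S_cover: "(\<Union>i\<in>{1..t}. S i) = UNIV - {0}"
    and S_card: "\<forall>i\<in>{1..t}. card (S i) = card (P i)"
    and S_sum: "\<forall>i\<in>{1..t}. (\<Sum>s\<in>S i. s) = 0"
  shows "\<exists>l :: 'v \<Rightarrow> 'g. dist_antimagic_labeling V adj l"
proof -
  have P_fin: "finite (P i)" if "i \<in> {1..t}" for i
    using graph P_cover that by (auto simp: simple_graph_def intro: finite_subset)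
  have P_family: "disjoint_family_on P {1..t}" and S_family: "disjoint_family_on S {1..t}"
    using P_disj S_disj by (auto simp: disjoint_family_on_def)
  obtain l where l: "\<And>i. i \<in> {1..t} \<Longrightarrow> bij_betw l (P i) (S i)"
    using blockwise_bij_betw_exists[OF P_family P_fin] S_card by (metis finite)
  have "bij_betw l V (UNIV - {0})"
    using bij_betw_UNION_disjoint[OF S_family l] unfolding P_cover S_cover .
  moreover have "(\<Sum>u\<in>insert v (nbhd V adj v). l u) = 0" if "v \<in> V" for v
  proof (rule sum_union_of_blocks_eq_0[OF _ P_family P_fin])
    show "insert v (nbhd V adj v) \<subseteq> (\<Union>i\<in>{1..t}. P i)"
      using that P_cover by (auto simp: nbhd_def)
    show "P i \<subseteq> insert v (nbhd V adj v)"
      if "i \<in> {1..t}" "P i \<inter> insert v (nbhd V adj v) \<noteq> {}" for i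
      using that P_twins by (intro true_twin_class_subset_closed_nbhd[OF graph]) auto
    show "(\<Sum>u\<in>P i. l u) = 0" if "i \<in> {1..t}" for i
      using sum.reindex_bij_betw[OF l[OF that], of id] S_sum that by simp
  qed simp
  ultimately have "dist_antimagic_labeling V adj l"
    by (rule dist_antimagic_labelingI_closed_nbhd_sum_0[OF graph])
  then show ?thesis by blast
qed

end
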